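(* Let $n\ge0$, let $\lambda$ be an integer partition with $|\lambda|=k$, and let $f_\lambda$ be the number of standard Young tableaux of shape $\lambda$. Then $$T^{(n)}_{\varnothing,\lambda}=(n+1)!\binom{n}{k}f_\lambda \qquad\text{and}\qquad T^{(n)}_{\lambda,\varnothing}=\frac{(n+1)!}{(k+1)!}\binom{n}{k}f_\lambda.$$
   Context: Young's lattice $\mathcal{Y}$ is the set of integer partitions (Young diagrams) ordered by inclusion of diagrams; $\mu\lessdot\nu$ means $\nu$ is obtained from $\mu$ by adding one cell, and $\nu\gtrdot\mu$ is the same relation reversed; $\varnothing$ is the empty partition. For partitions $\mu,\nu$, $T^{(n)}_{\mu,\nu}$ is the number of sequences $(\lambda^{(0)},\dots,\lambda^{(3n)})\in\mathcal{Y}^{3n+1}$ with $\lambda^{(0)}=\mu$, $\lambda^{(3n)}=\nu$, and such that for $0\le i<3n$: if $i\equiv0$ or $1\pmod 3$ then either $\lambda^{(i)}\lessdot\lambda^{(i+1)}$ or $\lambda^{(i)}=\lambda^{(i+1)}$; if $i\equiv2\pmod3$ then $\lambda^{(i)}\gtrdot\lambda^{(i+1)}$. *)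

theory Defs
  imports Complex_Main
begin

definition is_partition :: "nat list \<Rightarrow> bool" where
  "is_partition lam \<longleftrightarrow> sorted_wrt (\<ge>) lam \<and> 0 \<notin> set lam"

definition psize :: "nat list \<Rightarrow> nat" where
  "psize lam = sum_list lam"

text \<open>Young diagram: cells (row, column), 0-indexed.\<close>
definition cells :: "nat list \<Rightarrow> (nat \<times> nat) set" where
  "cells lam = {(i, j). i < length lam \<and> j < lam ! i}"

definition covers :: "nat list \<Rightarrow> nat list \<Rightarrow> bool" where
  "covers mu nu \<longleftrightarrow> is_partition mu \<and> is_partition nu \<and>
      cells mu \<subseteq> cells nu \<and> card (cells nu - cells mu) = 1"

definition step_ok :: "nat \<Rightarrow> nat list \<Rightarrow> nat list \<Rightarrow> bool" where
  "step_ok i a b \<longleftrightarrow>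
     (if i mod 3 = 2 then covers b a else (covers a b \<or> a = b))"

definition walks :: "nat \<Rightarrow> nat list \<Rightarrow> nat list \<Rightarrow> nat list list set" where
  "walks n mu nu = {ls. length ls = 3 * n + 1 \<and> (\<forall>l\<in>set ls. is_partition l) \<and>
       ls ! 0 = mu \<and> ls ! (3 * n) = nu \<and>
       (\<forall>i < 3 * n. step_ok i (ls ! i) (ls ! Suc i))}"

definition T :: "nat \<Rightarrow> nat list \<Rightarrow> nat list \<Rightarrow> nat" where
  "T n mu nu = card (walks n mu nu)"

definition SYT :: "nat list \<Rightarrow> ((nat \<times> nat) \<Rightarrow> nat) set" where
  "SYT lam = {t. bij_betw t (cells lam) {1..psize lam} \<and>
      (\<forall>c. c \<notin> cells lam \<longrightarrow> t c = 0) \<and>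
      (\<forall>i j. (i, Suc j) \<in> cells lam \<longrightarrow> t (i, j) < t (i, Suc j)) \<and>
      (\<forall>i j. (Suc i, j) \<in> cells lam \<longrightarrow> t (i, j) < t (Suc i, j))}"

definition num_SYT :: "nat list \<Rightarrow> nat" where
  "num_SYT lam = card (SYT lam)"

end

theory Submission
  imports Defs
begin

(*
  Young's lattice is 1-differential: a partition has exactly one more upper cover than lower
  covers, and two distinct partitions have as many common upper covers as common lower covers.
  For the up and down operators this says DU = UD + I.  Applied to the tableau counts f, and
  combined with f_lam = (SUM mu covered by lam. f_mu) (delete the cell holding the largest
  entry), it gives (SUM lam covering mu. f_lam) = (|mu| + 1) f_mu.  Hence, step by step, the
  number of walks from the empty partition to nu (or from mu to the empty partition) is f_nu
  (resp. f_mu) times a coefficient that depends only on the size and the length walked.  These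
  coefficients obey three-term recurrences, which Pascal's rule applied twice solves by
  (n+1)! (n choose k) and (n+1)!/(k+1)! (n choose k).
*)

section \<open>Row lengths\<close>

definition row :: "nat list \<Rightarrow> nat \<Rightarrow> nat" where
  "row lam i = (if i < length lam then lam ! i else 0)"

lemma cells_eq_row: "cells lam = {(i, j). j < row lam i}"
  unfolding cells_def row_def by (auto split: if_splits)

lemma row_Suc_le: "is_partition lam \<Longrightarrow> row lam (Suc i) \<le> row lam i"
  unfolding is_partition_def row_def by (auto simp: sorted_wrt_iff_nth_less)

lemma row_eq_0_iff:
  assumes "is_partition lam"
  shows "row lam i = 0 \<longleftrightarrow> length lam \<le> i"
proof -
  have "lam ! i \<noteq> 0" if "i < length lam"
    using assms that unfolding is_partition_def by (metis nth_mem)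
  then show ?thesis
    unfolding row_def by auto
qed

lemma partition_eqI:
  assumes "is_partition a" "is_partition b" "row a = row b"
  shows "a = b"
proof -
  have "row a (length b) = 0" "row b (length a) = 0"
    using row_eq_0_iff[OF assms(1), of "length a"] row_eq_0_iff[OF assms(2), of "length b"] assms(3)
    by simp_all
  then have "length a = length b"
    using row_eq_0_iff[OF assms(1), of "length b"] row_eq_0_iff[OF assms(2), of "length a"] by simp
  moreover have "a ! i = b ! i" if "i < length a" for i
    using fun_cong[OF assms(3), of i] that \<open>length a = length b\<close> by (simp add: row_def)
  ultimately show ?thesis by (rule nth_equalityI)
qed

lemma cells_inject:
  assumes "is_partition a" "is_partition b" "cells a = cells b"
  shows "a = b"
proof (rule partition_eqI[OF assms(1,2)])
  have "j < row a i \<longleftrightarrow> j < row b i" for i j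
    using assms(3) unfolding cells_eq_row by blast
  then have "row a i = row b i" for i
    by (meson linorder_neqE_nat less_irrefl)
  then show "row a = row b" ..
qed

lemma cells_eq_Sigma: "cells lam = Sigma {..<length lam} (\<lambda>i. {..<lam ! i})"
  unfolding cells_def by auto

lemma finite_cells: "finite (cells lam)"
  unfolding cells_eq_Sigma by auto

lemma card_cells: "card (cells lam) = psize lam"
  unfolding cells_eq_Sigma by (simp add: psize_def sum_list_sum_nth atLeast0LessThan)

lemma psize_eq_0_iff: "is_partition lam \<Longrightarrow> psize lam = 0 \<longleftrightarrow> lam = []"
  unfolding is_partition_def psize_def by (cases lam) (auto simp: sum_list_eq_0_iff)

definition row_function :: "(nat \<Rightarrow> nat) \<Rightarrow> bool" where
  "row_function r \<longleftrightarrow> (\<forall>i. r (Suc i) \<le> r i) \<and> (\<exists>L. r L = 0)"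

definition of_rows :: "(nat \<Rightarrow> nat) \<Rightarrow> nat list" where
  "of_rows r = map r [0..<(LEAST i. r i = 0)]"

lemma row_function_antimono: "row_function r \<Longrightarrow> i \<le> j \<Longrightarrow> r j \<le> r i"
  unfolding row_function_def by (rule lift_Suc_antimono_le[of r]) auto

lemma row_function_row: "is_partition lam \<Longrightarrow> row_function (row lam)"
  unfolding row_function_def using row_Suc_le row_eq_0_iff by blast

lemma
  assumes "row_function r"
  shows partition_of_rows: "is_partition (of_rows r)"
    and row_of_rows: "row (of_rows r) = r"
proof -
  define L where "L = (LEAST i. r i = 0)"
  have "r L = 0"
    using assms unfolding row_function_def L_def by (auto intro: LeastI)
  then have zero: "r i = 0" if "L \<le> i" for i
    using row_function_antimono[OF assms that] by simp
  have pos: "r i > 0" if "i < L" for i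
    using not_less_Least that unfolding L_def by blast
  show "is_partition (of_rows r)"
    unfolding is_partition_def of_rows_def L_def[symmetric]
    using pos row_function_antimono[OF assms]
    by (auto simp: sorted_wrt_iff_nth_less in_set_conv_nth) (metis less_irrefl)
  show "row (of_rows r) = r"
    unfolding of_rows_def L_def[symmetric] row_def using zero by (auto simp: fun_eq_iff)
qed

lemma of_rows_row: "is_partition lam \<Longrightarrow> of_rows (row lam) = lam"
  by (rule partition_eqI) (simp_all add: partition_of_rows row_of_rows row_function_row)

lemma row_function_sup:
  assumes "row_function r" "row_function s"
  shows "row_function (sup r s)"
proof -
  obtain L M where "r L = 0" "s M = 0"
    using assms unfolding row_function_def by blast
  then have "sup r s (max L M) = 0"
    using row_function_antimono[OF assms(1), of L "max L M"] row_function_antimono[OF assms(2), of M "max L M"]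
    by simp
  moreover have "sup r s (Suc i) \<le> sup r s i" for i
    using assms unfolding row_function_def sup_apply by (blast intro: sup_mono)
  ultimately show ?thesis
    unfolding row_function_def by blast
qed

lemma row_function_inf:
  assumes "row_function r" "row_function s"
  shows "row_function (inf r s)"
proof -
  obtain L where "r L = 0"
    using assms unfolding row_function_def by blast
  then have "inf r s L = 0" by (simp add: inf_min)
  moreover have "inf r s (Suc i) \<le> inf r s i" for i
    using assms unfolding row_function_def inf_apply by (blast intro: inf_mono)
  ultimately show ?thesis
    unfolding row_function_def by blast
qed

section \<open>Covers in Young's lattice\<close>

definition add_cell :: "(nat \<Rightarrow> nat) \<Rightarrow> nat \<Rightarrow> nat \<Rightarrow> nat" where
  "add_cell r i = r(i := Suc (r i))"

definition remove_cell :: "(nat \<Rightarrow> nat) \<Rightarrow> nat \<Rightarrow> nat \<Rightarrow> nat" where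
  "remove_cell r i = r(i := r i - 1)"

lemma remove_cell_add_cell: "remove_cell (add_cell r i) i = r"
  unfolding add_cell_def remove_cell_def by simp

lemma add_cell_inject: "add_cell r i = add_cell s i \<Longrightarrow> r = s"
  by (metis remove_cell_add_cell)

lemma add_cell_remove_cell: "0 < r i \<Longrightarrow> add_cell (remove_cell r i) i = r"
  unfolding add_cell_def remove_cell_def by (auto simp: fun_eq_iff)

lemma row_function_add_cell:
  assumes "row_function r" "i = 0 \<or> r i < r (i - 1)"
  shows "row_function (add_cell r i)"
proof -
  obtain L where "r L = 0"
    using assms(1) unfolding row_function_def by auto
  then have "add_cell r i (Suc (max L i)) = 0"
    using row_function_antimono[OF assms(1), of L "Suc (max L i)"] by (simp add: add_cell_def)
  moreover have "add_cell r i (Suc k) \<le> add_cell r i k" for k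
  proof -
    have "r (Suc k) \<le> r k"
      using assms(1) unfolding row_function_def by blast
    then show ?thesis
      using assms(2) unfolding add_cell_def by (cases "Suc k = i"; cases "k = i") auto
  qed
  ultimately show ?thesis
    unfolding row_function_def by blast
qed

lemma row_function_remove_cell:
  assumes "row_function r" "r (Suc i) < r i"
  shows "row_function (remove_cell r i)"
proof -
  obtain L where "r L = 0"
    using assms(1) unfolding row_function_def by auto
  then have "remove_cell r i L = 0"
    by (auto simp: remove_cell_def)
  moreover have "remove_cell r i (Suc k) \<le> remove_cell r i k" for k
  proof -
    have "r (Suc k) \<le> r k"
      using assms(1) unfolding row_function_def by blast
    then show ?thesis
      using assms(2) unfolding remove_cell_def by (cases "Suc k = i"; cases "k = i") auto
  qed
  ultimately show ?thesis
    unfolding row_function_def by blast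
qed

lemma cells_add_cell:
  assumes "row lam = add_cell (row mu) i"
  shows "cells lam = insert (i, row mu i) (cells mu)" "(i, row mu i) \<notin> cells mu"
  unfolding cells_eq_row assms add_cell_def by (auto split: if_splits)

lemma row_eq_add_cell_if_cells_diff:
  assumes sub: "cells mu \<subseteq> cells lam" and new: "cells lam - cells mu = {(i, j)}"
  shows "row lam = add_cell (row mu) i"
proof -
  have le: "row mu k \<le> row lam k" for k
  proof -
    have "(k, row lam k) \<notin> cells mu"
      using sub by (auto simp: cells_eq_row)
    then show ?thesis by (simp add: cells_eq_row)
  qed
  have diff: "(k, j') \<in> cells lam - cells mu \<longleftrightarrow> row mu k \<le> j' \<and> j' < row lam k" for k j'
    unfolding cells_eq_row by auto
  have "row lam k = row mu k" if "k \<noteq> i" for k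
  proof (rule ccontr)
    assume "row lam k \<noteq> row mu k"
    then have "(k, row mu k) \<in> cells lam - cells mu"
      using le[of k] diff by simp
    then show False
      using new that by simp
  qed
  moreover have "row lam i = Suc (row mu i)"
  proof -
    have "row mu i \<le> j" "j < row lam i"
      using new diff[of i j] by auto
    then have "(i, row mu i) \<in> cells lam - cells mu"
      using diff by simp
    then have "row mu i = j"
      using new by simp
    moreover have "\<not> Suc j < row lam i"
      using new diff[of i "Suc j"] \<open>row mu i = j\<close> by auto
    ultimately show ?thesis
      using \<open>j < row lam i\<close> by simp
  qed
  ultimately show ?thesis
    unfolding add_cell_def by (auto simp: fun_eq_iff)
qed

lemma covers_iff_add_cell:
  "covers mu lam \<longleftrightarrow> is_partition mu \<and> is_partition lam \<and> (\<exists>i. row lam = add_cell (row mu) i)"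
proof
  assume "covers mu lam"
  then have parts: "is_partition mu" "is_partition lam" and sub: "cells mu \<subseteq> cells lam"
    and one: "card (cells lam - cells mu) = 1"
    unfolding covers_def by auto
  from one obtain c where "cells lam - cells mu = {c}"
    by (rule card_1_singletonE)
  moreover obtain i j where "c = (i, j)"
    by (cases c)
  ultimately have "row lam = add_cell (row mu) i"
    using row_eq_add_cell_if_cells_diff[OF sub] by simp
  with parts show "is_partition mu \<and> is_partition lam \<and> (\<exists>i. row lam = add_cell (row mu) i)"
    by blast
next
  assume "is_partition mu \<and> is_partition lam \<and> (\<exists>i. row lam = add_cell (row mu) i)"
  then obtain i where parts: "is_partition mu" "is_partition lam"
    and "row lam = add_cell (row mu) i"
    by blast
  from cells_add_cell[OF this(3)] have "cells lam - cells mu = {(i, row mu i)}" "cells mu \<subseteq> cells lam"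
    by auto
  then show "covers mu lam"
    unfolding covers_def using parts by simp
qed

lemma covers_psize:
  assumes "covers mu lam"
  shows "psize lam = Suc (psize mu)"
proof -
  obtain i where "row lam = add_cell (row mu) i"
    using assms unfolding covers_iff_add_cell by blast
  from cells_add_cell[OF this] have "card (cells lam) = Suc (card (cells mu))"
    by (simp add: finite_cells)
  then show ?thesis by (simp add: card_cells)
qed

lemma coversE:
  assumes "covers mu lam"
  obtains c where "cells lam = insert c (cells mu)" "c \<notin> cells mu"
proof -
  obtain i where "row lam = add_cell (row mu) i"
    using assms unfolding covers_iff_add_cell by blast
  from cells_add_cell[OF this] show thesis
    by (rule that)
qed

definition up :: "nat list \<Rightarrow> nat list set" where
  "up mu = {lam. covers mu lam}"

definition down :: "nat list \<Rightarrow> nat list set" where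
  "down lam = {mu. covers mu lam}"

lemma up_psize: "lam \<in> up mu \<Longrightarrow> psize lam = Suc (psize mu)"
  and down_psize: "mu \<in> down lam \<Longrightarrow> psize lam = Suc (psize mu)"
  unfolding up_def down_def by (simp_all add: covers_psize)

lemma partition_if_in_up: "lam \<in> up mu \<Longrightarrow> is_partition lam"
  and partition_if_in_down: "mu \<in> down lam \<Longrightarrow> is_partition mu"
  unfolding up_def down_def covers_def by simp_all

lemma not_in_up_self: "mu \<notin> up mu"
  and not_in_down_self: "mu \<notin> down mu"
  using up_psize down_psize n_not_Suc_n by metis+

lemma down_Nil: "down [] = {}"
  unfolding down_def using covers_psize by (fastforce simp: psize_def)

definition addable_rows :: "nat list \<Rightarrow> nat set" where
  "addable_rows mu = {i. i = 0 \<or> row mu i < row mu (i - 1)}"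

definition removable_rows :: "nat list \<Rightarrow> nat set" where
  "removable_rows lam = {i. row lam (Suc i) < row lam i}"

lemma addable_rows_eq: "addable_rows mu = insert 0 (Suc ` removable_rows mu)"
proof (intro equalityI subsetI)
  fix i assume "i \<in> addable_rows mu"
  then show "i \<in> insert 0 (Suc ` removable_rows mu)"
    unfolding addable_rows_def removable_rows_def by (cases i) auto
qed (auto simp: addable_rows_def removable_rows_def)

lemma finite_removable_rows:
  assumes "is_partition lam"
  shows "finite (removable_rows lam)"
proof (rule finite_subset)
  show "removable_rows lam \<subseteq> {..<length lam}"
  proof
    fix i assume "i \<in> removable_rows lam"
    then have "row lam i \<noteq> 0"
      by (auto simp: removable_rows_def)
    then show "i \<in> {..<length lam}"
      using row_eq_0_iff[OF assms, of i] by simp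
  qed
qed simp

lemma up_eq_image:
  assumes "is_partition mu"
  shows "up mu = (\<lambda>i. of_rows (add_cell (row mu) i)) ` addable_rows mu"
proof (intro equalityI subsetI)
  fix lam assume "lam \<in> up mu"
  then obtain i where lam: "is_partition lam" "row lam = add_cell (row mu) i"
    unfolding up_def covers_iff_add_cell by blast
  have "i \<in> addable_rows mu"
    using row_Suc_le[OF lam(1), of "i - 1"] lam(2)
    by (cases i) (auto simp: addable_rows_def add_cell_def)
  moreover have "lam = of_rows (add_cell (row mu) i)"
    using of_rows_row[OF lam(1)] lam(2) by simp
  ultimately show "lam \<in> (\<lambda>i. of_rows (add_cell (row mu) i)) ` addable_rows mu" by blast
next
  fix lam assume "lam \<in> (\<lambda>i. of_rows (add_cell (row mu) i)) ` addable_rows mu"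
  then obtain i where "row_function (add_cell (row mu) i)" "lam = of_rows (add_cell (row mu) i)"
    using row_function_add_cell[OF row_function_row[OF assms]]
    unfolding addable_rows_def by blast
  then show "lam \<in> up mu"
    unfolding up_def covers_iff_add_cell using assms partition_of_rows row_of_rows by blast
qed

lemma down_eq_image:
  assumes "is_partition lam"
  shows "down lam = (\<lambda>i. of_rows (remove_cell (row lam) i)) ` removable_rows lam"
proof (intro equalityI subsetI)
  fix mu assume "mu \<in> down lam"
  then obtain i where mu: "is_partition mu" "row lam = add_cell (row mu) i"
    unfolding down_def covers_iff_add_cell by blast
  have "i \<in> removable_rows lam"
    using row_Suc_le[OF mu(1), of i] mu(2) by (auto simp: removable_rows_def add_cell_def)
  moreover have "mu = of_rows (remove_cell (row lam) i)"
    using of_rows_row[OF mu(1)] mu(2) remove_cell_add_cell by metis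
  ultimately show "mu \<in> (\<lambda>i. of_rows (remove_cell (row lam) i)) ` removable_rows lam" by blast
next
  fix mu assume "mu \<in> (\<lambda>i. of_rows (remove_cell (row lam) i)) ` removable_rows lam"
  then obtain i where i: "row lam (Suc i) < row lam i" and mu: "mu = of_rows (remove_cell (row lam) i)"
    unfolding removable_rows_def by blast
  have "row_function (remove_cell (row lam) i)"
    using row_function_remove_cell[OF row_function_row[OF assms] i] .
  then have "is_partition mu" "row lam = add_cell (row mu) i"
    using mu i partition_of_rows row_of_rows add_cell_remove_cell[of "row lam" i] by auto
  then show "mu \<in> down lam"
    unfolding down_def covers_iff_add_cell using assms by blast
qed

lemma finite_up: "is_partition mu \<Longrightarrow> finite (up mu)"
  and finite_down: "is_partition mu \<Longrightarrow> finite (down mu)"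
  by (simp_all add: up_eq_image down_eq_image addable_rows_eq finite_removable_rows)

lemma inj_on_of_rows:
  assumes "inj_on f A" "\<And>x. x \<in> A \<Longrightarrow> row_function (f x)"
  shows "inj_on (\<lambda>x. of_rows (f x)) A"
proof (rule inj_onI)
  fix x y assume "x \<in> A" "y \<in> A" "of_rows (f x) = of_rows (f y)"
  then have "f x = f y"
    using row_of_rows assms(2) by metis
  with assms(1) \<open>x \<in> A\<close> \<open>y \<in> A\<close> show "x = y"
    by (simp add: inj_on_eq_iff)
qed

lemma inj_add_cell: "inj (add_cell r)"
proof (rule injI)
  fix i j assume "add_cell r i = add_cell r j"
  from fun_cong[OF this, of i] show "i = j"
    unfolding add_cell_def by (auto split: if_splits)
qed

lemma inj_on_remove_cell: "inj_on (remove_cell r) {i. 0 < r i}"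
proof (rule inj_onI)
  fix i j assume "i \<in> {i. 0 < r i}" "remove_cell r i = remove_cell r j"
  from this(1) fun_cong[OF this(2), of i] show "i = j"
    unfolding remove_cell_def by (auto split: if_splits)
qed

lemma card_up_eq_Suc_card_down:
  assumes "is_partition mu"
  shows "card (up mu) = Suc (card (down mu))"
proof -
  have inj_up: "inj_on (\<lambda>i. of_rows (add_cell (row mu) i)) (addable_rows mu)"
    using inj_add_cell row_function_add_cell[OF row_function_row[OF assms]]
    by (intro inj_on_of_rows) (auto simp: addable_rows_def intro: inj_on_subset)
  have inj_down: "inj_on (\<lambda>i. of_rows (remove_cell (row mu) i)) (removable_rows mu)"
  proof (rule inj_on_of_rows)
    show "inj_on (remove_cell (row mu)) (removable_rows mu)"
      by (rule inj_on_subset[OF inj_on_remove_cell]) (auto simp: removable_rows_def)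
  qed (use row_function_remove_cell[OF row_function_row[OF assms]] in \<open>simp add: removable_rows_def\<close>)
  have "card (up mu) = card (addable_rows mu)"
    unfolding up_eq_image[OF assms] by (rule card_image[OF inj_up])
  also have "\<dots> = Suc (card (removable_rows mu))"
    using finite_removable_rows[OF assms] by (simp add: addable_rows_eq card_image)
  also have "card (removable_rows mu) = card (down mu)"
    unfolding down_eq_image[OF assms] by (rule card_image[OF inj_down, symmetric])
  finally show ?thesis .
qed

section \<open>Young's lattice is differential\<close>

lemma add_cell_eq_add_cell:
  assumes eq: "add_cell r i = add_cell s j" and "i \<noteq> j"
  shows "r = add_cell (inf r s) j" "s = add_cell (inf r s) i" "add_cell r i = sup r s"
proof -
  have pointwise: "(if k = i then Suc (r i) else r k) = (if k = j then Suc (s j) else s k)" for k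
    using fun_cong[OF eq, of k] unfolding add_cell_def by simp
  have si: "s i = Suc (r i)" and rj: "r j = Suc (s j)"
    using pointwise[of i] pointwise[of j] \<open>i \<noteq> j\<close> by auto
  have rest: "r k = s k" if "k \<noteq> i" "k \<noteq> j" for k
    using pointwise[of k] that by simp
  show "r = add_cell (inf r s) j"
  proof
    fix k show "r k = add_cell (inf r s) j k"
      using si rj rest[of k] \<open>i \<noteq> j\<close> unfolding add_cell_def inf_fun_def inf_min
      by (cases "k = i"; cases "k = j") simp_all
  qed
  show "s = add_cell (inf r s) i"
  proof
    fix k show "s k = add_cell (inf r s) i k"
      using si rj rest[of k] \<open>i \<noteq> j\<close> unfolding add_cell_def inf_fun_def inf_min
      by (cases "k = i"; cases "k = j") simp_all
  qed
  show "add_cell r i = sup r s"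
  proof
    fix k show "add_cell r i k = sup r s k"
      using si rj rest[of k] \<open>i \<noteq> j\<close> unfolding add_cell_def sup_fun_def sup_max
      by (cases "k = i"; cases "k = j") simp_all
  qed
qed

lemma add_cell_add_cell:
  "i \<noteq> j \<Longrightarrow> add_cell (add_cell m i) j = sup (add_cell m i) (add_cell m j)"
  unfolding add_cell_def by (auto simp: fun_eq_iff sup_max)

lemma common_upper_cover:
  assumes "covers mu lam" "covers rho lam" "mu \<noteq> rho"
  shows "lam = of_rows (sup (row mu) (row rho))"
    "covers (of_rows (inf (row mu) (row rho))) mu" "covers (of_rows (inf (row mu) (row rho))) rho"
proof -
  obtain i j where parts: "is_partition mu" "is_partition rho" "is_partition lam"
    and i: "row lam = add_cell (row mu) i" and j: "row lam = add_cell (row rho) j"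
    using assms(1,2) unfolding covers_iff_add_cell by blast
  have "i \<noteq> j"
  proof
    assume "i = j"
    then have "add_cell (row mu) i = add_cell (row rho) i"
      using i j by simp
    then have "row mu = row rho"
      by (rule add_cell_inject)
    then show False
      using partition_eqI[OF parts(1,2)] assms(3) by blast
  qed
  moreover have "add_cell (row mu) i = add_cell (row rho) j"
    using i j by simp
  ultimately have eq: "row mu = add_cell (inf (row mu) (row rho)) j"
      "row rho = add_cell (inf (row mu) (row rho)) i" "row lam = sup (row mu) (row rho)"
    using add_cell_eq_add_cell i by auto
  then show "lam = of_rows (sup (row mu) (row rho))"
    using of_rows_row[OF parts(3)] by simp
  have "row_function (inf (row mu) (row rho))"
    using row_function_inf row_function_row parts by blast
  then have meet: "is_partition (of_rows (inf (row mu) (row rho)))" "row (of_rows (inf (row mu) (row rho))) = inf (row mu) (row rho)"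
    by (simp_all add: partition_of_rows row_of_rows)
  show "covers (of_rows (inf (row mu) (row rho))) mu"
    unfolding covers_iff_add_cell using parts meet eq by (auto intro!: exI[of _ j])
  show "covers (of_rows (inf (row mu) (row rho))) rho"
    unfolding covers_iff_add_cell using parts meet eq by (auto intro!: exI[of _ i])
qed

lemma common_lower_cover:
  assumes "covers sig mu" "covers sig rho" "mu \<noteq> rho"
  shows "sig = of_rows (inf (row mu) (row rho))"
    "covers mu (of_rows (sup (row mu) (row rho)))" "covers rho (of_rows (sup (row mu) (row rho)))"
proof -
  obtain i j where parts: "is_partition mu" "is_partition rho" "is_partition sig"
    and i: "row mu = add_cell (row sig) i" and j: "row rho = add_cell (row sig) j"
    using assms(1,2) unfolding covers_iff_add_cell by blast
  have "i \<noteq> j"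
    using i j assms(3) partition_eqI[OF parts(1,2)] by auto
  then have eq: "add_cell (row mu) j = sup (row mu) (row rho)" "add_cell (row rho) i = sup (row mu) (row rho)"
    using add_cell_add_cell[of i j "row sig"] add_cell_add_cell[of j i "row sig"] i j
    by (simp_all add: sup_commute)
  then have "row mu = add_cell (inf (row mu) (row rho)) i"
    using add_cell_eq_add_cell(2)[of "row rho" i "row mu" j] \<open>i \<noteq> j\<close> by (simp add: inf_commute)
  then have "row sig = inf (row mu) (row rho)"
    using i by (simp add: add_cell_inject)
  then show "sig = of_rows (inf (row mu) (row rho))"
    using of_rows_row[OF parts(3)] by simp
  have "row_function (sup (row mu) (row rho))"
    using row_function_sup row_function_row parts by blast
  then have join: "is_partition (of_rows (sup (row mu) (row rho)))" "row (of_rows (sup (row mu) (row rho))) = sup (row mu) (row rho)"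
    by (simp_all add: partition_of_rows row_of_rows)
  show "covers mu (of_rows (sup (row mu) (row rho)))"
    unfolding covers_iff_add_cell using parts join eq by (auto intro!: exI[of _ j])
  show "covers rho (of_rows (sup (row mu) (row rho)))"
    unfolding covers_iff_add_cell using parts join eq by (auto intro!: exI[of _ i])
qed

lemma card_up_inter_up_eq_card_down_inter_down:
  assumes "mu \<noteq> rho"
  shows "card (up mu \<inter> up rho) = card (down mu \<inter> down rho)"
proof -
  let ?join = "of_rows (sup (row mu) (row rho))" and ?meet = "of_rows (inf (row mu) (row rho))"
  have ups: "up mu \<inter> up rho \<subseteq> {?join}"
    unfolding up_def using common_upper_cover(1) assms by blast
  have downs: "down mu \<inter> down rho \<subseteq> {?meet}"
    unfolding down_def using common_lower_cover(1) assms by blast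
  show ?thesis
  proof (cases "up mu \<inter> up rho = {}")
    case True
    have "down mu \<inter> down rho = {}"
    proof (rule ccontr)
      assume "down mu \<inter> down rho \<noteq> {}"
      then have "?join \<in> up mu \<inter> up rho"
        unfolding up_def down_def using common_lower_cover(2,3) assms by blast
      with True show False by blast
    qed
    with True show ?thesis by simp
  next
    case False
    then have "?meet \<in> down mu \<inter> down rho"
      unfolding up_def down_def using common_upper_cover(2,3) assms by blast
    then have "down mu \<inter> down rho = {?meet}" "up mu \<inter> up rho = {?join}"
      using downs ups False by blast+
    then show ?thesis by simp
  qed
qed

lemma sum_sum_eq_sum_card:
  fixes g :: "'b \<Rightarrow> 'c::comm_semiring_1"
  assumes "finite I" "finite U" "\<And>i. i \<in> I \<Longrightarrow> B i \<subseteq> U"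
  shows "(\<Sum>i\<in>I. \<Sum>j\<in>B i. g j) = (\<Sum>j\<in>U. of_nat (card {i \<in> I. j \<in> B i}) * g j)"
proof -
  have "(\<Sum>i\<in>I. \<Sum>j\<in>B i. g j) = (\<Sum>i\<in>I. \<Sum>j\<in>{j \<in> U. j \<in> B i}. g j)"
    using assms(3) by (intro sum.cong) auto
  also have "\<dots> = (\<Sum>j\<in>U. \<Sum>i\<in>{i \<in> I. j \<in> B i}. g j)"
    by (rule sum.swap_restrict[OF assms(1,2)])
  finally show ?thesis by simp
qed

(* The commutation relation DU = UD + I, tested against g. *)
lemma sum_up_down_eq_sum_down_up:
  fixes g :: "nat list \<Rightarrow> 'a::comm_semiring_1"
  assumes "is_partition mu"
  shows "(\<Sum>lam\<in>up mu. \<Sum>rho\<in>down lam. g rho) = (\<Sum>sig\<in>down mu. \<Sum>rho\<in>up sig. g rho) + g mu"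
proof -
  define U where "U = (\<Union>lam\<in>up mu. down lam) \<union> (\<Union>sig\<in>down mu. up sig) \<union> {mu}"
  have "finite U"
    unfolding U_def using assms finite_up finite_down partition_if_in_up partition_if_in_down by auto
  have multiplicity: "card {lam \<in> up mu. rho \<in> down lam} = card {sig \<in> down mu. rho \<in> up sig} + (if rho = mu then 1 else 0)"
    for rho
  proof -
    have "{lam \<in> up mu. rho \<in> down lam} = up mu \<inter> up rho" "{sig \<in> down mu. rho \<in> up sig} = down mu \<inter> down rho"
      unfolding up_def down_def by auto
    then show ?thesis
      using card_up_eq_Suc_card_down[OF assms] card_up_inter_up_eq_card_down_inter_down
      by auto
  qed
  have "(\<Sum>lam\<in>up mu. \<Sum>rho\<in>down lam. g rho) = (\<Sum>rho\<in>U. of_nat (card {lam \<in> up mu. rho \<in> down lam}) * g rho)"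
    by (rule sum_sum_eq_sum_card[OF finite_up[OF assms] \<open>finite U\<close>]) (auto simp: U_def)
  also have "\<dots> = (\<Sum>rho\<in>U. of_nat (card {sig \<in> down mu. rho \<in> up sig}) * g rho + (if rho = mu then g rho else 0))"
    by (rule sum.cong) (simp_all add: multiplicity distrib_right)
  also have "\<dots> = (\<Sum>rho\<in>U. of_nat (card {sig \<in> down mu. rho \<in> up sig}) * g rho) + g mu"
    using \<open>finite U\<close> by (simp add: sum.distrib U_def)
  also have "(\<Sum>rho\<in>U. of_nat (card {sig \<in> down mu. rho \<in> up sig}) * g rho) = (\<Sum>sig\<in>down mu. \<Sum>rho\<in>up sig. g rho)"
    by (rule sum_sum_eq_sum_card[OF finite_down[OF assms] \<open>finite U\<close>, symmetric]) (auto simp: U_def)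
  finally show ?thesis .
qed

section \<open>Standard Young tableaux\<close>

definition left_or_above :: "nat \<times> nat \<Rightarrow> nat \<times> nat \<Rightarrow> bool" where
  "left_or_above p q \<longleftrightarrow> q = (fst p, Suc (snd p)) \<or> q = (Suc (fst p), snd p)"

lemma left_or_above_neq: "left_or_above p q \<Longrightarrow> p \<noteq> q"
  unfolding left_or_above_def by (cases p) auto

lemma cells_closed:
  assumes "is_partition lam" "q \<in> cells lam" "left_or_above p q"
  shows "p \<in> cells lam"
  using assms row_Suc_le[OF assms(1), of "fst p"]
  unfolding left_or_above_def cells_eq_row by auto

lemma SYT_iff:
  "t \<in> SYT lam \<longleftrightarrow> t ` cells lam = {1..psize lam} \<and> (\<forall>c. c \<notin> cells lam \<longrightarrow> t c = 0) \<and>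
     (\<forall>p q. left_or_above p q \<longrightarrow> q \<in> cells lam \<longrightarrow> t p < t q)"
proof -
  have "bij_betw t (cells lam) {1..psize lam} \<longleftrightarrow> t ` cells lam = {1..psize lam}"
    using eq_card_imp_inj_on[OF finite_cells, of t] card_cells[of lam]
    by (auto simp: bij_betw_def)
  then show ?thesis
    unfolding SYT_def left_or_above_def by auto
qed

lemma SYT_entry_bounds: "t \<in> SYT lam \<Longrightarrow> c \<in> cells lam \<Longrightarrow> t c \<in> {1..psize lam}"
  unfolding SYT_iff by blast

lemma SYT_increasing: "t \<in> SYT lam \<Longrightarrow> left_or_above p q \<Longrightarrow> q \<in> cells lam \<Longrightarrow> t p < t q"
  unfolding SYT_iff by blast

lemma finite_SYT: "finite (SYT lam)"
proof (rule finite_subset)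
  show "SYT lam \<subseteq> {t. \<forall>c. (c \<in> cells lam \<longrightarrow> t c \<in> {1..psize lam}) \<and> (c \<notin> cells lam \<longrightarrow> t c = 0)}"
    using SYT_entry_bounds by (auto simp: SYT_iff)
  show "finite {t. \<forall>c. (c \<in> cells lam \<longrightarrow> t c \<in> {1..psize lam}) \<and> (c \<notin> cells lam \<longrightarrow> t c = 0)}"
    by (rule finite_set_of_finite_funs[OF finite_cells]) simp
qed

lemma num_SYT_Nil: "num_SYT [] = 1"
proof -
  have "SYT [] = {\<lambda>_. 0}"
    unfolding SYT_def cells_def psize_def by (auto simp: fun_eq_iff bij_betw_def)
  then show ?thesis unfolding num_SYT_def by simp
qed

lemma SYT_remove_max_cell:
  assumes t: "t \<in> SYT lam" and c: "cells lam = insert c (cells mu)" "c \<notin> cells mu"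
    and max: "t c = psize lam" and size: "psize lam = Suc (psize mu)"
  shows "t(c := 0) \<in> SYT mu"
proof -
  have im: "t ` cells lam = {1..psize lam}"
    and zero: "\<And>d. d \<notin> cells lam \<Longrightarrow> t d = 0"
    and incr: "\<And>p q. left_or_above p q \<Longrightarrow> q \<in> cells lam \<Longrightarrow> t p < t q"
    using t unfolding SYT_iff by auto
  have inj: "inj_on t (cells lam)"
    using t unfolding SYT_def bij_betw_def by blast
  have "t(c := 0) ` cells mu = t ` cells mu"
    using c(2) by (intro image_cong) auto
  also have "\<dots> = t ` (cells lam - {c})"
    using c by simp
  also have "\<dots> = t ` cells lam - t ` {c}"
    by (rule inj_on_image_set_diff[OF inj]) (use c(1) in auto)
  also have "\<dots> = {1..psize mu}"
    using im max size by auto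
  finally have im': "t(c := 0) ` cells mu = {1..psize mu}" .
  have zero': "(t(c := 0)) d = 0" if "d \<notin> cells mu" for d
    using zero c(1) that by auto
  have incr': "(t(c := 0)) p < (t(c := 0)) q" if "left_or_above p q" "q \<in> cells mu" for p q
  proof -
    have "(t(c := 0)) p \<le> t p" "q \<noteq> c"
      using c(2) that(2) by auto
    then show ?thesis
      using incr[OF that(1)] c(1) that(2) by simp
  qed
  show ?thesis
    unfolding SYT_iff using im' zero' incr' by simp
qed

lemma SYT_add_max_cell:
  assumes t: "t \<in> SYT mu" and parts: "is_partition lam" "is_partition mu"
    and c: "cells lam = insert c (cells mu)" "c \<notin> cells mu" and size: "psize lam = Suc (psize mu)"
  shows "t(c := psize lam) \<in> SYT lam"
proof -
  have im: "t ` cells mu = {1..psize mu}"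
    and zero: "\<And>d. d \<notin> cells mu \<Longrightarrow> t d = 0"
    and incr: "\<And>p q. left_or_above p q \<Longrightarrow> q \<in> cells mu \<Longrightarrow> t p < t q"
    using t unfolding SYT_iff by auto
  have "t(c := psize lam) ` cells mu = t ` cells mu"
    using c(2) by (intro image_cong) auto
  then have "t(c := psize lam) ` cells lam = insert (psize lam) {1..psize mu}"
    unfolding c(1) im by (simp only: image_insert fun_upd_same)
  also have "\<dots> = {1..psize lam}"
    using size by auto
  finally have im': "t(c := psize lam) ` cells lam = {1..psize lam}" .
  have zero': "(t(c := psize lam)) d = 0" if "d \<notin> cells lam" for d
    using zero c(1) that by auto
  have incr': "(t(c := psize lam)) p < (t(c := psize lam)) q" if pq: "left_or_above p q" "q \<in> cells lam" for p q
  proof (cases "q = c")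
    case True
    have "p \<in> cells lam" "p \<noteq> q"
      using cells_closed[OF parts(1) pq(2,1)] left_or_above_neq[OF pq(1)] by auto
    then have "p \<in> cells mu"
      using True c(1) by blast
    then have "t p \<in> {1..psize mu}"
      using im by blast
    then show ?thesis
      using True \<open>p \<in> cells mu\<close> c(2) size by auto
  next
    case False
    then have "q \<in> cells mu"
      using pq(2) c(1) by blast
    then have "p \<in> cells mu"
      using cells_closed[OF parts(2) _ pq(1)] by blast
    then show ?thesis
      using incr[OF pq(1) \<open>q \<in> cells mu\<close>] False c(2) by auto
  qed
  show ?thesis
    unfolding SYT_iff using im' zero' incr' by simp
qed

lemma card_SYT_max_at:
  assumes "covers mu lam" "cells lam = insert c (cells mu)" "c \<notin> cells mu"
  shows "card {t \<in> SYT lam. t c = psize lam} = num_SYT mu"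
  unfolding num_SYT_def
proof (rule bij_betw_same_card[of "\<lambda>t. t(c := 0)"], rule bij_betw_byWitness[where f' = "\<lambda>t. t(c := psize lam)"])
  have parts: "is_partition mu" "is_partition lam" and size: "psize lam = Suc (psize mu)"
    using assms(1) covers_psize unfolding covers_def by auto
  show "\<forall>t\<in>{t \<in> SYT lam. t c = psize lam}. (t(c := 0))(c := psize lam) = t"
    by auto
  show "\<forall>t\<in>SYT mu. (t(c := psize lam))(c := 0) = t"
    using assms(3) unfolding SYT_def by (auto simp: fun_eq_iff)
  show "(\<lambda>t. t(c := 0)) ` {t \<in> SYT lam. t c = psize lam} \<subseteq> SYT mu"
    using SYT_remove_max_cell[OF _ assms(2,3) _ size] by blast
  show "(\<lambda>t. t(c := psize lam)) ` SYT mu \<subseteq> {t \<in> SYT lam. t c = psize lam}"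
    using SYT_add_max_cell[OF _ parts(2,1) assms(2,3) size] by auto
qed

lemma SYT_max_entry_removable:
  assumes t: "t \<in> SYT lam" and ij: "(i, j) \<in> cells lam" "t (i, j) = psize lam"
  shows "row lam i = Suc j" "row lam (Suc i) < row lam i"
proof -
  have outside: "q \<notin> cells lam" if "left_or_above (i, j) q" for q
  proof
    assume "q \<in> cells lam"
    then have "t (i, j) < t q" "t q \<le> psize lam"
      using SYT_increasing[OF t that] SYT_entry_bounds[OF t] by auto
    then show False
      using ij(2) by simp
  qed
  have "j < row lam i" "\<not> Suc j < row lam i" "\<not> j < row lam (Suc i)"
    using ij(1) outside[of "(i, Suc j)"] outside[of "(Suc i, j)"]
    unfolding left_or_above_def cells_eq_row by auto
  then show "row lam i = Suc j" "row lam (Suc i) < row lam i"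
    by auto
qed

lemma SYT_max_entry_at_lower_cover:
  assumes t: "t \<in> SYT lam" and lam: "is_partition lam" "lam \<noteq> []"
  obtains mu c where "covers mu lam" "cells lam = insert c (cells mu)" "c \<notin> cells mu" "t c = psize lam"
proof -
  have "psize lam \<in> t ` cells lam"
    using t lam psize_eq_0_iff[of lam] unfolding SYT_iff by auto
  then obtain i j where ij: "(i, j) \<in> cells lam" "t (i, j) = psize lam"
    by auto
  note corner = SYT_max_entry_removable[OF t ij]
  define mu where "mu = of_rows (remove_cell (row lam) i)"
  have "row_function (remove_cell (row lam) i)"
    using row_function_remove_cell[OF row_function_row[OF lam(1)] corner(2)] .
  then have "is_partition mu" "row mu = remove_cell (row lam) i"
    unfolding mu_def by (simp_all add: partition_of_rows row_of_rows)
  moreover have "row lam = add_cell (row mu) i" "row mu i = j"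
    using calculation(2) add_cell_remove_cell[of "row lam" i] corner(1) by (simp_all add: remove_cell_def)
  ultimately show thesis
    using that lam(1) ij(2) cells_add_cell[of lam mu i] unfolding covers_iff_add_cell by blast
qed

lemma lower_cover_eqI:
  assumes "covers m1 lam" "covers m2 lam" "cells lam - cells m1 = cells lam - cells m2"
  shows "m1 = m2"
proof (rule cells_inject)
  show "is_partition m1" "is_partition m2"
    using assms(1,2) unfolding covers_def by blast+
  have "cells m1 \<subseteq> cells lam" "cells m2 \<subseteq> cells lam"
    using assms(1,2) unfolding covers_def by blast+
  then show "cells m1 = cells m2"
    using assms(3) by blast
qed

lemma lower_cover_eq_if_same_max_cell:
  assumes t: "t \<in> SYT lam" and cov: "covers m1 lam" "covers m2 lam"
    and max: "t ` (cells lam - cells m1) = {psize lam}" "t ` (cells lam - cells m2) = {psize lam}"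
  shows "m1 = m2"
proof -
  obtain c1 c2 where c1: "cells lam = insert c1 (cells m1)" "c1 \<notin> cells m1"
    and c2: "cells lam = insert c2 (cells m2)" "c2 \<notin> cells m2"
    using cov by (meson coversE)
  then have diffs: "cells lam - cells m1 = {c1}" "cells lam - cells m2 = {c2}"
    by auto
  have "inj_on t (cells lam)"
    using t unfolding SYT_def bij_betw_def by blast
  moreover have "t c1 = t c2"
    using max unfolding diffs by simp
  ultimately have "c1 = c2"
    using c1(1) c2(1) by (metis inj_onD insertI1)
  then show ?thesis
    using lower_cover_eqI[OF cov] diffs by simp
qed

lemma num_SYT_eq_sum_down:
  assumes lam: "is_partition lam" "lam \<noteq> []"
  shows "num_SYT lam = (\<Sum>mu\<in>down lam. num_SYT mu)"
proof -
  define G where "G mu = {t \<in> SYT lam. t ` (cells lam - cells mu) = {psize lam}}" for mu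
  have G_eq: "G mu = {t \<in> SYT lam. t c = psize lam}"
    if "cells lam = insert c (cells mu)" "c \<notin> cells mu" for mu c
  proof -
    have "cells lam - cells mu = {c}"
      using that by auto
    then show ?thesis
      unfolding G_def by auto
  qed
  have "SYT lam = (\<Union>mu\<in>down lam. G mu)"
  proof (intro equalityI subsetI)
    fix t assume "t \<in> SYT lam"
    then obtain mu c where "covers mu lam" "cells lam = insert c (cells mu)" "c \<notin> cells mu" "t c = psize lam"
      using SYT_max_entry_at_lower_cover lam by blast
    with \<open>t \<in> SYT lam\<close> show "t \<in> (\<Union>mu\<in>down lam. G mu)"
      unfolding down_def using G_eq by blast
  qed (auto simp: G_def)
  moreover have "G m1 \<inter> G m2 = {}" if "m1 \<in> down lam" "m2 \<in> down lam" "m1 \<noteq> m2" for m1 m2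
    using that lower_cover_eq_if_same_max_cell unfolding G_def down_def by blast
  moreover have "finite (G mu)" for mu
    unfolding G_def using finite_SYT by simp
  ultimately have "num_SYT lam = (\<Sum>mu\<in>down lam. card (G mu))"
    unfolding num_SYT_def using finite_down[OF lam(1)] by (simp add: card_UN_disjoint)
  also have "\<dots> = (\<Sum>mu\<in>down lam. num_SYT mu)"
  proof (rule sum.cong)
    fix mu assume "mu \<in> down lam"
    then have cov: "covers mu lam"
      by (simp add: down_def)
    then obtain c where c: "cells lam = insert c (cells mu)" "c \<notin> cells mu"
      by (rule coversE)
    show "card (G mu) = num_SYT mu"
      unfolding G_eq[OF c] by (rule card_SYT_max_at[OF cov c])
  qed simp
  finally show ?thesis .
qed

lemma sum_num_SYT_down:
  assumes "is_partition lam"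
  shows "(\<Sum>mu\<in>down lam. num_SYT mu) = (if lam = [] then 0 else num_SYT lam)"
  using num_SYT_eq_sum_down[OF assms] by (simp add: down_Nil)

lemma sum_num_SYT_up:
  assumes "is_partition mu"
  shows "(\<Sum>lam\<in>up mu. num_SYT lam) = Suc (psize mu) * num_SYT mu"
  using assms
proof (induction "psize mu" arbitrary: mu rule: less_induct)
  case less
  have "(\<Sum>lam\<in>up mu. num_SYT lam) = (\<Sum>lam\<in>up mu. \<Sum>rho\<in>down lam. num_SYT rho)"
  proof (rule sum.cong)
    fix lam assume "lam \<in> up mu"
    moreover have "psize [] = 0"
      by (simp add: psize_def)
    ultimately show "num_SYT lam = (\<Sum>rho\<in>down lam. num_SYT rho)"
      using sum_num_SYT_down[OF partition_if_in_up] up_psize by fastforce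
  qed simp
  also have "\<dots> = (\<Sum>sig\<in>down mu. \<Sum>rho\<in>up sig. num_SYT rho) + num_SYT mu"
    by (rule sum_up_down_eq_sum_down_up[OF less.prems])
  also have "(\<Sum>sig\<in>down mu. \<Sum>rho\<in>up sig. num_SYT rho) = (\<Sum>sig\<in>down mu. psize mu * num_SYT sig)"
    using less.hyps partition_if_in_down down_psize by (intro sum.cong) auto
  also have "\<dots> = psize mu * num_SYT mu"
    using sum_num_SYT_down[OF less.prems] by (simp add: sum_distrib_left[symmetric] psize_def)
  finally show ?case
    by simp
qed

lemma sum_up_size_weighted:
  assumes "is_partition mu"
  shows "(\<Sum>lam\<in>up mu. a (psize lam) * num_SYT lam) = a (Suc (psize mu)) * Suc (psize mu) * num_SYT mu"
proof -
  have "(\<Sum>lam\<in>up mu. a (psize lam) * num_SYT lam) = (\<Sum>lam\<in>up mu. a (Suc (psize mu)) * num_SYT lam)"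
    using up_psize by (intro sum.cong) auto
  also have "\<dots> = a (Suc (psize mu)) * (\<Sum>lam\<in>up mu. num_SYT lam)"
    by (rule sum_distrib_left[symmetric])
  finally show ?thesis
    using sum_num_SYT_up[OF assms] by (simp only: mult.assoc)
qed

lemma sum_down_size_weighted:
  assumes "is_partition lam"
  shows "(\<Sum>mu\<in>down lam. a (psize mu) * num_SYT mu) = (case psize lam of 0 \<Rightarrow> 0 | Suc k \<Rightarrow> a k) * num_SYT lam"
proof -
  have "(\<Sum>mu\<in>down lam. a (psize mu) * num_SYT mu) = (\<Sum>mu\<in>down lam. a (psize lam - 1) * num_SYT mu)"
    using down_psize by (intro sum.cong) auto
  then show ?thesis
    using sum_num_SYT_down[OF assms] psize_eq_0_iff[OF assms] down_Nil
    by (cases "psize lam") (simp_all add: sum_distrib_left[symmetric])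
qed

section \<open>Counting walks\<close>

(* The i-th step is governed by step_ok (off + i), so that a walk can be split after its first step. *)
definition shifted_walks :: "nat \<Rightarrow> nat \<Rightarrow> nat list \<Rightarrow> nat list \<Rightarrow> nat list list set" where
  "shifted_walks off m mu nu = {ls. length ls = Suc m \<and> (\<forall>l\<in>set ls. is_partition l) \<and>
       ls ! 0 = mu \<and> ls ! m = nu \<and> (\<forall>i<m. step_ok (off + i) (ls ! i) (ls ! Suc i))}"

definition next_steps :: "nat \<Rightarrow> nat list \<Rightarrow> nat list set" where
  "next_steps i mu = {nu. is_partition nu \<and> step_ok i mu nu}"

definition prev_steps :: "nat \<Rightarrow> nat list \<Rightarrow> nat list set" where
  "prev_steps i nu = {mu. is_partition mu \<and> step_ok i mu nu}"

lemma next_steps_eq: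
  "is_partition mu \<Longrightarrow> next_steps i mu = (if i mod 3 = 2 then down mu else insert mu (up mu))"
  unfolding next_steps_def step_ok_def up_def down_def covers_def by auto

lemma prev_steps_eq:
  "is_partition nu \<Longrightarrow> prev_steps i nu = (if i mod 3 = 2 then up nu else insert nu (down nu))"
  unfolding prev_steps_def step_ok_def up_def down_def covers_def by auto

lemma step_ok_partition_iff: "step_ok i mu nu \<Longrightarrow> is_partition mu \<longleftrightarrow> is_partition nu"
  unfolding step_ok_def covers_def by (auto split: if_splits)

lemma mem_next_steps_iff_mem_prev_steps: "nu \<in> next_steps i mu \<longleftrightarrow> mu \<in> prev_steps i nu"
  unfolding next_steps_def prev_steps_def using step_ok_partition_iff by blast

lemma finite_next_steps: "finite (next_steps i mu)"
proof (cases "is_partition mu")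
  case False
  then have "next_steps i mu = {}"
    unfolding next_steps_def using step_ok_partition_iff by blast
  then show ?thesis by simp
qed (simp add: next_steps_eq finite_up finite_down)

lemma finite_prev_steps: "finite (prev_steps i nu)"
proof (cases "is_partition nu")
  case False
  then have "prev_steps i nu = {}"
    unfolding prev_steps_def using step_ok_partition_iff by blast
  then show ?thesis by simp
qed (simp add: prev_steps_eq finite_up finite_down)

fun walk_count :: "nat \<Rightarrow> nat \<Rightarrow> nat list \<Rightarrow> nat list \<Rightarrow> nat" where
  "walk_count off 0 mu nu = (if mu = nu \<and> is_partition mu then 1 else 0)"
| "walk_count off (Suc m) mu nu = (\<Sum>x\<in>next_steps off mu. walk_count (Suc off) m x nu)"

lemma shifted_walks_0: "shifted_walks off 0 mu nu = (if mu = nu \<and> is_partition mu then {[mu]} else {})"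
  unfolding shifted_walks_def by (auto simp: length_Suc_conv)

lemma Cons_in_shifted_walks:
  "x # ls \<in> shifted_walks off (Suc m) mu nu \<longleftrightarrow>
     x = mu \<and> ls \<in> shifted_walks (Suc off) m (ls ! 0) nu \<and> ls ! 0 \<in> next_steps off mu"
  unfolding shifted_walks_def next_steps_def
  by (auto simp: All_less_Suc2 length_Suc_conv dest: step_ok_partition_iff)

lemma shifted_walks_Suc:
  "shifted_walks off (Suc m) mu nu = (\<Union>x\<in>next_steps off mu. (#) mu ` shifted_walks (Suc off) m x nu)"
proof (intro equalityI subsetI)
  fix ls assume ls: "ls \<in> shifted_walks off (Suc m) mu nu"
  then obtain x ls' where "ls = x # ls'"
    unfolding shifted_walks_def by (cases ls) auto
  with ls have "ls = mu # ls'" "ls' \<in> shifted_walks (Suc off) m (ls' ! 0) nu" "ls' ! 0 \<in> next_steps off mu"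
    by (simp_all add: Cons_in_shifted_walks)
  then show "ls \<in> (\<Union>x\<in>next_steps off mu. (#) mu ` shifted_walks (Suc off) m x nu)"
    by blast
next
  fix ls assume "ls \<in> (\<Union>x\<in>next_steps off mu. (#) mu ` shifted_walks (Suc off) m x nu)"
  then obtain x ls' where x: "x \<in> next_steps off mu" and ls': "ls' \<in> shifted_walks (Suc off) m x nu"
    and "ls = mu # ls'"
    by blast
  moreover have "ls' ! 0 = x"
    using ls' unfolding shifted_walks_def by blast
  ultimately show "ls \<in> shifted_walks off (Suc m) mu nu"
    by (simp add: Cons_in_shifted_walks)
qed

lemma card_shifted_walks:
  "finite (shifted_walks off m mu nu) \<and> card (shifted_walks off m mu nu) = walk_count off m mu nu"
proof (induction m arbitrary: off mu)
  case 0
  then show ?case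
    by (auto simp: shifted_walks_0)
next
  case (Suc m)
  have disjoint: "(#) mu ` shifted_walks (Suc off) m x nu \<inter> (#) mu ` shifted_walks (Suc off) m y nu = {}"
    if "x \<noteq> y" for x y
    using that unfolding shifted_walks_def by auto
  have "card (shifted_walks off (Suc m) mu nu) = (\<Sum>x\<in>next_steps off mu. card ((#) mu ` shifted_walks (Suc off) m x nu))"
    unfolding shifted_walks_Suc using Suc.IH disjoint finite_next_steps by (intro card_UN_disjoint) auto
  also have "\<dots> = walk_count off (Suc m) mu nu"
    using Suc.IH by (simp add: card_image)
  finally show ?case
    using Suc.IH finite_next_steps by (simp add: shifted_walks_Suc)
qed

lemma T_eq_walk_count: "T n mu nu = walk_count 0 (3 * n) mu nu"
proof -
  have "walks n mu nu = shifted_walks 0 (3 * n) mu nu"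
    unfolding walks_def shifted_walks_def by simp
  then show ?thesis
    unfolding T_def using card_shifted_walks by simp
qed

lemma walk_count_Suc_right:
  "walk_count off (Suc m) mu nu = (\<Sum>x\<in>prev_steps (off + m) nu. walk_count off m mu x)"
proof (induction m arbitrary: off mu)
  case 0
  have "walk_count off (Suc 0) mu nu = (\<Sum>x\<in>next_steps off mu. if x = nu then 1 else 0)"
    by (auto intro!: sum.cong simp: next_steps_def)
  also have "\<dots> = (if mu \<in> prev_steps off nu then 1 else 0)"
    by (simp add: finite_next_steps mem_next_steps_iff_mem_prev_steps)
  also have "\<dots> = (\<Sum>x\<in>prev_steps off nu. if mu = x then 1 else 0)"
    by (simp add: finite_prev_steps)
  also have "\<dots> = (\<Sum>x\<in>prev_steps (off + 0) nu. walk_count off 0 mu x)"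
    by (auto intro!: sum.cong simp: prev_steps_def)
  finally show ?case .
next
  case (Suc m)
  have "walk_count off (Suc (Suc m)) mu nu = (\<Sum>x\<in>next_steps off mu. \<Sum>y\<in>prev_steps (Suc off + m) nu. walk_count (Suc off) m x y)"
    using Suc.IH by simp
  also have "\<dots> = (\<Sum>y\<in>prev_steps (off + Suc m) nu. \<Sum>x\<in>next_steps off mu. walk_count (Suc off) m x y)"
    by (subst sum.swap) simp
  finally show ?case
    by simp
qed

fun from_empty_coeff :: "nat \<Rightarrow> nat \<Rightarrow> nat" where
  "from_empty_coeff 0 k = (if k = 0 then 1 else 0)"
| "from_empty_coeff (Suc m) k =
     (if m mod 3 = 2 then from_empty_coeff m (Suc k) * Suc k
      else from_empty_coeff m k + (case k of 0 \<Rightarrow> 0 | Suc j \<Rightarrow> from_empty_coeff m j))"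

fun to_empty_coeff :: "nat \<Rightarrow> nat \<Rightarrow> nat \<Rightarrow> nat" where
  "to_empty_coeff off 0 k = (if k = 0 then 1 else 0)"
| "to_empty_coeff off (Suc m) k =
     (if off mod 3 = 2 then (case k of 0 \<Rightarrow> 0 | Suc j \<Rightarrow> to_empty_coeff (Suc off) m j)
      else to_empty_coeff (Suc off) m k + to_empty_coeff (Suc off) m (Suc k) * Suc k)"

lemma walk_count_from_Nil:
  "is_partition nu \<Longrightarrow> walk_count 0 m [] nu = from_empty_coeff m (psize nu) * num_SYT nu"
proof (induction m arbitrary: nu)
  case 0
  then show ?case
    using psize_eq_0_iff[OF 0] by (auto simp: num_SYT_Nil)
next
  case (Suc m)
  have "walk_count 0 (Suc m) [] nu = (\<Sum>x\<in>prev_steps m nu. walk_count 0 m [] x)"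
    by (simp only: walk_count_Suc_right add_0)
  also have "\<dots> = (\<Sum>x\<in>prev_steps m nu. from_empty_coeff m (psize x) * num_SYT x)"
    using Suc.IH by (intro sum.cong) (auto simp: prev_steps_def)
  also have "\<dots> = from_empty_coeff (Suc m) (psize nu) * num_SYT nu"
    using Suc.prems sum_up_size_weighted sum_down_size_weighted finite_down not_in_down_self
    by (cases "psize nu") (auto simp: prev_steps_eq algebra_simps)
  finally show ?case .
qed

lemma walk_count_to_Nil:
  "is_partition mu \<Longrightarrow> walk_count off m mu [] = to_empty_coeff off m (psize mu) * num_SYT mu"
proof (induction m arbitrary: off mu)
  case 0
  then show ?case
    using psize_eq_0_iff[OF 0] by (auto simp: num_SYT_Nil)
next
  case (Suc m)
  have "walk_count off (Suc m) mu [] = (\<Sum>x\<in>next_steps off mu. to_empty_coeff (Suc off) m (psize x) * num_SYT x)"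
    using Suc.IH by (auto intro: sum.cong simp: next_steps_def)
  also have "\<dots> = to_empty_coeff off (Suc m) (psize mu) * num_SYT mu"
    using Suc.prems sum_up_size_weighted sum_down_size_weighted finite_up not_in_up_self
    by (cases "psize mu") (auto simp: next_steps_eq algebra_simps)
  finally show ?case .
qed

section \<open>Closed forms of the coefficients\<close>

lemma Suc_times_choose_second_difference:
  "Suc k * ((n choose Suc k) + 2 * (n choose k) + (case k of 0 \<Rightarrow> 0 | Suc j \<Rightarrow> n choose j))
     = Suc (Suc n) * (Suc n choose k)"
proof -
  have expand: "Suc (Suc n) choose Suc k = (n choose Suc k) + 2 * (n choose k) + (case k of 0 \<Rightarrow> 0 | Suc j \<Rightarrow> n choose j)"
    by (cases k) simp_all
  show ?thesis
    unfolding expand[symmetric] by (rule Suc_times_binomial)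
qed

lemma from_empty_coeff_closed: "from_empty_coeff (3 * n) k = fact (Suc n) * (n choose k)"
proof (induction n arbitrary: k)
  case 0
  then show ?case by simp
next
  case (Suc n)
  let ?c = "from_empty_coeff (3 * n)" and ?F = "fact (Suc n) :: nat"
  have three: "3 * Suc n = Suc (Suc (Suc (3 * n)))"
    by simp
  have "Suc (Suc (3 * n)) mod 3 = 2" "Suc (3 * n) mod 3 = 1" "3 * n mod 3 = 0"
    by presburger+
  then have "from_empty_coeff (3 * Suc n) k
      = (?c (Suc k) + ?c k + (?c k + (case k of 0 \<Rightarrow> 0 | Suc j \<Rightarrow> ?c j))) * Suc k"
    unfolding three by (cases k) simp_all
  also have "\<dots> = Suc k * (?F * (n choose Suc k) + 2 * (?F * (n choose k)) + (case k of 0 \<Rightarrow> 0 | Suc j \<Rightarrow> ?F * (n choose j)))"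
    by (simp only: Suc.IH) (simp add: algebra_simps)
  also have "\<dots> = ?F * (Suc k * ((n choose Suc k) + 2 * (n choose k) + (case k of 0 \<Rightarrow> 0 | Suc j \<Rightarrow> n choose j)))"
    by (cases k) (simp_all del: fact_Suc add: algebra_simps)
  also have "\<dots> = fact (Suc (Suc n)) * (Suc n choose k)"
    by (simp only: Suc_times_choose_second_difference) (simp add: algebra_simps)
  finally show ?case .
qed

lemma to_empty_coeff_closed:
  "off mod 3 = 0 \<Longrightarrow> to_empty_coeff off (3 * n) k * fact (Suc k) = fact (Suc n) * (n choose k)"
proof (induction n arbitrary: off k)
  case 0
  then show ?case by simp
next
  case (Suc n)
  let ?b = "to_empty_coeff (Suc (Suc (Suc off))) (3 * n)" and ?F = "fact (Suc n) :: nat"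
  have three: "3 * Suc n = Suc (Suc (Suc (3 * n)))"
    by simp
  have "Suc (Suc off) mod 3 = 2" "Suc off mod 3 = 1" and mod: "Suc (Suc (Suc off)) mod 3 = 0"
    using Suc.prems by presburger+
  then have "to_empty_coeff off (3 * Suc n) k
      = (case k of 0 \<Rightarrow> 0 | Suc j \<Rightarrow> ?b j) + ?b k * Suc k + (?b k + ?b (Suc k) * Suc (Suc k)) * Suc k"
    using Suc.prems unfolding three by simp
  then have "to_empty_coeff off (3 * Suc n) k * fact (Suc k)
      = Suc k * ((case k of 0 \<Rightarrow> 0 | Suc j \<Rightarrow> ?b j * fact (Suc j)) + 2 * (?b k * fact (Suc k))
          + ?b (Suc k) * fact (Suc (Suc k)))"
    by (cases k) (simp_all del: fact_Suc add: fact_Suc[of "Suc m" for m] algebra_simps)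
  also have "\<dots> = Suc k * ((case k of 0 \<Rightarrow> 0 | Suc j \<Rightarrow> ?F * (n choose j)) + 2 * (?F * (n choose k))
          + ?F * (n choose Suc k))"
    by (simp only: Suc.IH[OF mod])
  also have "\<dots> = ?F * (Suc k * ((n choose Suc k) + 2 * (n choose k) + (case k of 0 \<Rightarrow> 0 | Suc j \<Rightarrow> n choose j)))"
    by (cases k) (simp_all del: fact_Suc add: algebra_simps)
  also have "\<dots> = fact (Suc (Suc n)) * (Suc n choose k)"
    by (simp only: Suc_times_choose_second_difference) (simp add: algebra_simps)
  finally show ?case .
qed

theorem mainTheorem11:
  fixes n k :: nat and lam :: "nat list"
  assumes "is_partition lam" and "psize lam = k"
  shows "T n [] lam = fact (n + 1) * (n choose k) * num_SYT lam
     \<and> real (T n lam []) = real (fact (n + 1)) / real (fact (k + 1)) * real (n choose k) * real (num_SYT lam)"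
proof
  show "T n [] lam = fact (n + 1) * (n choose k) * num_SYT lam"
    using walk_count_from_Nil[OF assms(1)] from_empty_coeff_closed assms(2) by (simp add: T_eq_walk_count)
  have "to_empty_coeff 0 (3 * n) k * fact (k + 1) = fact (n + 1) * (n choose k)"
    using to_empty_coeff_closed[of 0 n k] by simp
  then have "real (to_empty_coeff 0 (3 * n) k) * real (fact (k + 1)) = real (fact (n + 1)) * real (n choose k)"
    by (simp only: of_nat_mult[symmetric])
  then have "real (to_empty_coeff 0 (3 * n) k) = real (fact (n + 1)) * real (n choose k) / real (fact (k + 1))"
    by (metis fact_nonzero nonzero_mult_div_cancel_right of_nat_eq_0_iff)
  then have "real (to_empty_coeff 0 (3 * n) k) = real (fact (n + 1)) / real (fact (k + 1)) * real (n choose k)"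
    by (simp only: times_divide_eq_left)
  then show "real (T n lam []) = real (fact (n + 1)) / real (fact (k + 1)) * real (n choose k) * real (num_SYT lam)"
    using walk_count_to_Nil[OF assms(1)] assms(2) by (simp add: T_eq_walk_count)
qed

end
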